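(* Let $P$ and $P'$ be two probability measures on a measurable space $(\Omega,\mathcal A)$. Let $a,b>0$ and let $(\Delta_n)_{n\in\mathbb N}$ be a sequence of positive numbers with $\Delta_n\to\infty$. Set $K_n:=\lceil an^2\rceil$. Suppose that for all sufficiently large $n\in\mathbb N$ there are random variables $X^n_k$, $k\in\{1,\dots,K_n\}$, on $(\Omega,\mathcal A)$ which are pairwise uncorrelated in $k$ both under $P$ and under $P'$, satisfy $|X^n_k|\le b$, and satisfy $$E_{P'}[X^n_k]-E_P[X^n_k]\ge\tfrac1n\Delta_n,\qquad k\in\{1,\dots,K_n\}.$$ Then $P$ and $P'$ are mutually singular. *)

theory Defs
  imports "HOL-Probability.Probability"
begin

definition mutually_singular :: "'a measure \<Rightarrow> 'a measure \<Rightarrow> bool" where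
  "mutually_singular M N \<longleftrightarrow>
     (\<exists>A \<in> sets M. emeasure M A = 0 \<and> emeasure N (space M - A) = 0)"

definition pairwise_uncorrelated :: "'a measure \<Rightarrow> 'i set \<Rightarrow> ('i \<Rightarrow> 'a \<Rightarrow> real) \<Rightarrow> bool" where
  "pairwise_uncorrelated M I X \<longleftrightarrow>
     (\<forall>k\<in>I. \<forall>l\<in>I. k \<noteq> l \<longrightarrow>
        (\<integral>\<omega>. X k \<omega> * X l \<omega> \<partial>M) = (\<integral>\<omega>. X k \<omega> \<partial>M) * (\<integral>\<omega>. X l \<omega> \<partial>M))"

end

theory Submission
  imports Defs
begin

text \<open>Average the \<open>K\<^sub>n \<ge> a n\<^sup>2\<close> test variables. Since they are uncorrelated and bounded by \<open>b\<close>,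
  the average has variance at most \<open>b\<^sup>2 / K\<^sub>n\<close> under both \<open>P\<close> and \<open>P'\<close>, while its two means
  differ by at least \<open>\<Delta>\<^sub>n / n\<close>. By Chebyshev, the event that the average exceeds the \<open>P\<close>-mean
  by half this gap has \<open>P\<close>-probability, and its complement \<open>P'\<close>-probability, at most
  \<open>4 b\<^sup>2 / (a \<Delta>\<^sub>n\<^sup>2) \<rightarrow> 0\<close>. Sets that are small for \<open>P\<close> with \<open>P'\<close>-small complements, taken
  with summable bounds, give mutual singularity by Borel-Cantelli.\<close>

lemma (in finite_measure) integrable_mult_bounded:
  fixes f g :: "'a \<Rightarrow> real"
  assumes "f \<in> borel_measurable M" "g \<in> borel_measurable M"
    and "\<And>\<omega>. \<omega> \<in> space M \<Longrightarrow> \<bar>f \<omega>\<bar> \<le> b"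
    and "\<And>\<omega>. \<omega> \<in> space M \<Longrightarrow> \<bar>g \<omega>\<bar> \<le> c"
  shows "integrable M (\<lambda>\<omega>. f \<omega> * g \<omega>)"
proof (rule integrable_const_bound[where B = "b * c"])
  show "AE \<omega> in M. norm (f \<omega> * g \<omega>) \<le> b * c"
    using assms(3,4) by (auto simp: abs_mult intro!: mult_mono order_trans[OF abs_ge_zero])
qed (use assms(1,2) in measurable)

lemma (in prob_space) expectation_centered_mult:
  fixes f g :: "'a \<Rightarrow> real"
  assumes "integrable M f" "integrable M g" "integrable M (\<lambda>\<omega>. f \<omega> * g \<omega>)"
  shows "expectation (\<lambda>\<omega>. (f \<omega> - expectation f) * (g \<omega> - expectation g))
           = expectation (\<lambda>\<omega>. f \<omega> * g \<omega>) - expectation f * expectation g"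
  using assms by (simp add: algebra_simps prob_space)

lemma (in prob_space) variance_sum_uncorrelated:
  fixes X :: "'i \<Rightarrow> 'a \<Rightarrow> real"
  assumes "finite I"
    and int: "\<And>k. k \<in> I \<Longrightarrow> integrable M (X k)"
    and int_mult: "\<And>k l. k \<in> I \<Longrightarrow> l \<in> I \<Longrightarrow> integrable M (\<lambda>\<omega>. X k \<omega> * X l \<omega>)"
    and unc: "pairwise_uncorrelated M I X"
  shows "variance (\<lambda>\<omega>. \<Sum>k\<in>I. X k \<omega>) = (\<Sum>k\<in>I. variance (X k))"
proof -
  define Y where "Y k \<omega> = X k \<omega> - expectation (X k)" for k \<omega>
  have int_Y: "integrable M (\<lambda>\<omega>. Y k \<omega> * Y l \<omega>)" if "k \<in> I" "l \<in> I" for k l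
    using int[OF that(1)] int[OF that(2)] int_mult[OF that]
    by (simp add: Y_def algebra_simps)
  have cov: "expectation (\<lambda>\<omega>. Y k \<omega> * Y l \<omega>) = (if k = l then variance (X k) else 0)"
    if "k \<in> I" "l \<in> I" for k l
    using expectation_centered_mult[OF int[OF that(1)] int[OF that(2)] int_mult[OF that]]
      unc that by (auto simp: Y_def pairwise_uncorrelated_def power2_eq_square)
  have "(\<Sum>k\<in>I. X k \<omega>) - expectation (\<lambda>\<omega>. \<Sum>k\<in>I. X k \<omega>) = (\<Sum>k\<in>I. Y k \<omega>)" for \<omega>
    using int by (simp add: Y_def sum_subtractf)
  then have "(\<lambda>\<omega>. ((\<Sum>k\<in>I. X k \<omega>) - expectation (\<lambda>\<omega>. \<Sum>k\<in>I. X k \<omega>))\<^sup>2)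
          = (\<lambda>\<omega>. \<Sum>k\<in>I. \<Sum>l\<in>I. Y k \<omega> * Y l \<omega>)"
    by (simp add: power2_eq_square sum_product)
  then have "variance (\<lambda>\<omega>. \<Sum>k\<in>I. X k \<omega>) = (\<Sum>k\<in>I. \<Sum>l\<in>I. expectation (\<lambda>\<omega>. Y k \<omega> * Y l \<omega>))"
    using int_Y by simp
  also have "\<dots> = (\<Sum>k\<in>I. variance (X k))"
    using \<open>finite I\<close> by (simp add: cov cong: sum.cong)
  finally show ?thesis .
qed

lemma (in prob_space) variance_scale:
  fixes f :: "'a \<Rightarrow> real"
  shows "variance (\<lambda>\<omega>. c * f \<omega>) = c\<^sup>2 * variance f"
  by (simp add: power_mult_distrib flip: right_diff_distrib)

lemma (in prob_space) variance_le_bound_sq: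
  fixes f :: "'a \<Rightarrow> real"
  assumes "f \<in> borel_measurable M" and "\<And>\<omega>. \<omega> \<in> space M \<Longrightarrow> \<bar>f \<omega>\<bar> \<le> b"
  shows "variance f \<le> b\<^sup>2"
proof -
  have int_f: "integrable M f"
    using assms by (intro integrable_const_bound[where B = b]) auto
  have int_f2: "integrable M (\<lambda>\<omega>. (f \<omega>)\<^sup>2)"
    using integrable_mult_bounded[OF assms(1,1,2,2)] by (simp add: power2_eq_square)
  have "variance f \<le> expectation (\<lambda>\<omega>. (f \<omega>)\<^sup>2)"
    using variance_eq[OF int_f int_f2] by simp
  also have "\<dots> \<le> b\<^sup>2"
    using assms(2) by (intro integral_le_const[OF int_f2] AE_I2) (metis abs_ge_zero power2_abs power_mono)
  finally show ?thesis .
qed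

lemma (in prob_space) prob_mean_deviation_le:
  fixes X :: "'i \<Rightarrow> 'a \<Rightarrow> real" and b e :: real
  assumes "finite I" "I \<noteq> {}"
    and meas: "\<And>k. k \<in> I \<Longrightarrow> X k \<in> borel_measurable M"
    and bnd: "\<And>k \<omega>. k \<in> I \<Longrightarrow> \<omega> \<in> space M \<Longrightarrow> \<bar>X k \<omega>\<bar> \<le> b"
    and "pairwise_uncorrelated M I X" and "e > 0"
  shows "prob {\<omega>\<in>space M. e \<le> \<bar>(\<Sum>k\<in>I. X k \<omega>) / card I - (\<Sum>k\<in>I. expectation (X k)) / card I\<bar>}
           \<le> b\<^sup>2 / (card I * e\<^sup>2)"
proof -
  define S where "S \<omega> = (\<Sum>k\<in>I. X k \<omega>) / card I" for \<omega>
  have card: "real (card I) > 0"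
    using assms(1,2) by (simp add: card_gt_0_iff)
  have int: "integrable M (X k)" if "k \<in> I" for k
    using meas[OF that] bnd[OF that] by (intro integrable_const_bound[where B = b]) auto
  have int_mult: "integrable M (\<lambda>\<omega>. X k \<omega> * X l \<omega>)" if "k \<in> I" "l \<in> I" for k l
    using that by (intro integrable_mult_bounded[OF meas meas bnd bnd])
  have meas_S: "S \<in> borel_measurable M"
    unfolding S_def using meas by measurable
  have "\<bar>S \<omega>\<bar> \<le> b" if "\<omega> \<in> space M" for \<omega>
  proof -
    have "\<bar>\<Sum>k\<in>I. X k \<omega>\<bar> \<le> card I * b"
      using order_trans[OF sum_abs sum_mono[of I "\<lambda>k. \<bar>X k \<omega>\<bar>" "\<lambda>_. b"]] bnd that by auto
    then show ?thesis
      using card by (simp add: S_def field_simps)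
  qed
  then have int_S2: "integrable M (\<lambda>\<omega>. (S \<omega>)\<^sup>2)"
    using integrable_mult_bounded[OF meas_S meas_S, of b b] by (simp add: power2_eq_square)
  have "variance S = (1 / card I)\<^sup>2 * (\<Sum>k\<in>I. variance (X k))"
    unfolding S_def using variance_scale[of "1 / card I" "\<lambda>\<omega>. \<Sum>k\<in>I. X k \<omega>"]
      variance_sum_uncorrelated[OF assms(1) int int_mult assms(5)]
    by simp
  also have "\<dots> \<le> (1 / card I)\<^sup>2 * (card I * b\<^sup>2)"
    using sum_mono[of I "\<lambda>k. variance (X k)" "\<lambda>_. b\<^sup>2"] variance_le_bound_sq[OF meas bnd]
    by (intro mult_left_mono) auto
  also have "\<dots> = b\<^sup>2 / card I"
    using card by (simp add: power2_eq_square)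
  finally have var_S: "variance S \<le> b\<^sup>2 / card I" .
  have "expectation S = (\<Sum>k\<in>I. expectation (X k)) / card I"
    unfolding S_def using int by simp
  then have "prob {\<omega>\<in>space M. e \<le> \<bar>S \<omega> - (\<Sum>k\<in>I. expectation (X k)) / card I\<bar>} \<le> variance S / e\<^sup>2"
    using Chebyshev_inequality[of S e] meas_S int_S2 \<open>e > 0\<close> by simp
  also have "\<dots> \<le> b\<^sup>2 / (card I * e\<^sup>2)"
    using divide_right_mono[OF var_S, of "e\<^sup>2"] by simp
  finally show ?thesis
    by (simp add: S_def)
qed

lemma mutually_singular_if_separated:
  fixes P P' :: "'a measure"
  assumes "finite_measure P" "finite_measure P'" and sets_eq: "sets P' = sets P"
    and separated: "\<And>\<epsilon>. \<epsilon> > 0 \<Longrightarrow> \<exists>A\<in>sets P. measure P A \<le> \<epsilon> \<and> measure P' (space P - A) \<le> \<epsilon>"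
  shows "mutually_singular P P'"
proof -
  interpret P: finite_measure P by fact
  interpret P': finite_measure P' by fact
  have space_eq: "space P' = space P"
    using sets_eq_imp_space_eq[OF sets_eq] .
  obtain A where A: "\<And>j. A j \<in> sets P" "\<And>j. measure P (A j) \<le> (1/2)^j"
      "\<And>j. measure P' (space P - A j) \<le> (1/2)^j"
    using separated[of "(1/2)^_"] by (metis zero_less_divide_1_iff zero_less_numeral zero_less_power)
  define C where "C j = space P - A j" for j
  have C: "C j \<in> sets P'" for j
    unfolding C_def sets_eq using A(1) by auto
  have geometric: "summable (\<lambda>j::nat. (1/2::real)^j)"
    by (rule summable_geometric) simp
  have null_A: "limsup A \<in> null_sets P"
  proof (rule borel_cantelli_limsup1)
    show "summable (\<lambda>j. measure P (A j))"
      by (rule summable_comparison_test[OF _ geometric]) (use A(2) in auto)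
  qed (use A(1) in \<open>auto simp: less_top[symmetric]\<close>)
  have null_C: "limsup C \<in> null_sets P'"
  proof (rule borel_cantelli_limsup1)
    show "summable (\<lambda>j. measure P' (C j))"
      by (rule summable_comparison_test[OF _ geometric]) (use A(3) in \<open>auto simp: C_def\<close>)
  qed (use C in \<open>auto simp: less_top[symmetric]\<close>)
  have "space P - limsup A \<subseteq> limsup C"
    by (auto simp: limsup_INF_SUP C_def) (meson max.cobounded1 max.cobounded2 atLeast_iff)
  then have "space P - limsup A \<in> null_sets P'"
    using null_A by (intro null_sets_subset[OF null_C]) (auto simp: sets_eq space_eq)
  then show ?thesis
    unfolding mutually_singular_def using null_A by auto
qed

lemma separating_set_of_mean_gap:
  fixes P P' :: "'a measure" and X :: "'i \<Rightarrow> 'a \<Rightarrow> real" and b d :: real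
  assumes "prob_space P" "prob_space P'" and sets_eq: "sets P' = sets P"
    and "finite I" "I \<noteq> {}"
    and meas: "\<And>k. k \<in> I \<Longrightarrow> X k \<in> borel_measurable P"
    and bnd: "\<And>k \<omega>. k \<in> I \<Longrightarrow> \<omega> \<in> space P \<Longrightarrow> \<bar>X k \<omega>\<bar> \<le> b"
    and unc: "pairwise_uncorrelated P I X" and unc': "pairwise_uncorrelated P' I X"
    and "d > 0" and gap: "\<And>k. k \<in> I \<Longrightarrow> (\<integral>\<omega>. X k \<omega> \<partial>P') - (\<integral>\<omega>. X k \<omega> \<partial>P) \<ge> d"
  shows "\<exists>A\<in>sets P. measure P A \<le> 4 * b\<^sup>2 / (card I * d\<^sup>2)
                 \<and> measure P' (space P - A) \<le> 4 * b\<^sup>2 / (card I * d\<^sup>2)"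
proof -
  interpret P: prob_space P by fact
  interpret P': prob_space P' by fact
  have space_eq: "space P' = space P"
    using sets_eq_imp_space_eq[OF sets_eq] .
  have meas': "X k \<in> borel_measurable P'" if "k \<in> I" for k
    unfolding measurable_cong_sets[OF sets_eq refl] by (rule meas[OF that])
  define S where "S \<omega> = (\<Sum>k\<in>I. X k \<omega>) / card I" for \<omega>
  define m where "m = (\<Sum>k\<in>I. P.expectation (X k)) / card I"
  define m' where "m' = (\<Sum>k\<in>I. P'.expectation (X k)) / card I"
  have card: "real (card I) > 0"
    using \<open>finite I\<close> \<open>I \<noteq> {}\<close> by (simp add: card_gt_0_iff)
  have "card I * d \<le> (\<Sum>k\<in>I. P'.expectation (X k) - P.expectation (X k))"
    using sum_mono[OF gap] by simp
  then have "d \<le> m' - m"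
    using card by (simp add: m_def m'_def sum_subtractf field_simps)
  define A where "A = {\<omega>\<in>space P. m + d / 2 \<le> S \<omega>}"
  have meas_S: "S \<in> borel_measurable P" "S \<in> borel_measurable P'"
    unfolding S_def using meas meas' by measurable
  have bound: "b\<^sup>2 / (card I * (d / 2)\<^sup>2) = 4 * b\<^sup>2 / (card I * d\<^sup>2)"
    by (simp add: power_divide)
  have "A \<in> sets P"
    unfolding A_def using meas_S by measurable
  moreover have "measure P A \<le> 4 * b\<^sup>2 / (card I * d\<^sup>2)"
  proof -
    have "measure P A \<le> P.prob {\<omega>\<in>space P. d / 2 \<le> \<bar>S \<omega> - m\<bar>}"
      unfolding A_def using meas_S by (intro P.finite_measure_mono) (auto simp: abs_if)
    also have "\<dots> \<le> b\<^sup>2 / (card I * (d / 2)\<^sup>2)"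
      unfolding S_def m_def using \<open>d > 0\<close>
      by (intro P.prob_mean_deviation_le[OF \<open>finite I\<close> \<open>I \<noteq> {}\<close> meas bnd unc]) auto
    finally show ?thesis
      by (simp only: bound)
  qed
  moreover have "measure P' (space P - A) \<le> 4 * b\<^sup>2 / (card I * d\<^sup>2)"
  proof -
    have "measure P' (space P - A) \<le> P'.prob {\<omega>\<in>space P'. d / 2 \<le> \<bar>S \<omega> - m'\<bar>}"
      unfolding A_def space_eq using meas_S \<open>d \<le> m' - m\<close>
      by (intro P'.finite_measure_mono) (auto simp: abs_if simp flip: space_eq)
    also have "\<dots> \<le> b\<^sup>2 / (card I * (d / 2)\<^sup>2)"
      unfolding S_def m'_def using \<open>d > 0\<close> bnd
      by (intro P'.prob_mean_deviation_le[OF \<open>finite I\<close> \<open>I \<noteq> {}\<close> meas' _ unc']) (auto simp: space_eq)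
    finally show ?thesis
      by (simp only: bound)
  qed
  ultimately show ?thesis
    by blast
qed

lemma separating_set_of_quadratic_family:
  fixes P P' :: "'a measure" and X :: "nat \<Rightarrow> 'a \<Rightarrow> real" and a b \<delta> :: real and n :: nat
  assumes "prob_space P" "prob_space P'" "sets P' = sets P"
    and "a > 0" "\<delta> > 0" "n \<ge> 1"
    and X: "\<forall>k\<in>{1..nat \<lceil>a * real n ^ 2\<rceil>}.
              X k \<in> borel_measurable P \<and>
              (\<forall>\<omega>\<in>space P. \<bar>X k \<omega>\<bar> \<le> b) \<and>
              (\<integral>\<omega>. X k \<omega> \<partial>P') - (\<integral>\<omega>. X k \<omega> \<partial>P) \<ge> \<delta> / real n"
    and unc: "pairwise_uncorrelated P {1..nat \<lceil>a * real n ^ 2\<rceil>} X"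
      "pairwise_uncorrelated P' {1..nat \<lceil>a * real n ^ 2\<rceil>} X"
  shows "\<exists>A\<in>sets P. measure P A \<le> 4 * b\<^sup>2 / (a * \<delta>\<^sup>2)
                 \<and> measure P' (space P - A) \<le> 4 * b\<^sup>2 / (a * \<delta>\<^sup>2)"
proof -
  define K where "K = nat \<lceil>a * real n ^ 2\<rceil>"
  have "a * real n ^ 2 \<le> K"
    unfolding K_def by linarith
  moreover have "a * real n ^ 2 > 0"
    using \<open>a > 0\<close> \<open>n \<ge> 1\<close> by simp
  ultimately have "K > 0"
    by linarith
  have "a * \<delta>\<^sup>2 = a * real n ^ 2 * (\<delta> / n)\<^sup>2"
    using \<open>n \<ge> 1\<close> by (simp add: power_divide)
  also have "\<dots> \<le> card {1..K} * (\<delta> / n)\<^sup>2"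
    using \<open>a * real n ^ 2 \<le> K\<close> by (simp add: mult_right_mono)
  finally have "4 * b\<^sup>2 / (card {1..K} * (\<delta> / n)\<^sup>2) \<le> 4 * b\<^sup>2 / (a * \<delta>\<^sup>2)"
    using \<open>a > 0\<close> \<open>\<delta> > 0\<close> \<open>K > 0\<close> \<open>n \<ge> 1\<close> by (intro divide_left_mono mult_pos_pos) auto
  moreover have "\<exists>A\<in>sets P. measure P A \<le> 4 * b\<^sup>2 / (card {1..K} * (\<delta> / n)\<^sup>2)
                 \<and> measure P' (space P - A) \<le> 4 * b\<^sup>2 / (card {1..K} * (\<delta> / n)\<^sup>2)"
    using X unc \<open>K > 0\<close> \<open>\<delta> > 0\<close> \<open>n \<ge> 1\<close> unfolding K_def[symmetric]
    by (intro separating_set_of_mean_gap[OF assms(1-3)]) auto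
  ultimately show ?thesis
    by (meson order_trans)
qed

theorem lemma4:
  fixes P P' :: "'a measure" and a b :: real and \<Delta> :: "nat \<Rightarrow> real"
  assumes "prob_space P" and "prob_space P'"
    and "sets P' = sets P"
    and "a > 0" and "b > 0"
    and "\<And>n. \<Delta> n > 0"
    and "filterlim \<Delta> at_top sequentially"
    and "\<exists>N. \<forall>n\<ge>N. \<exists>X :: nat \<Rightarrow> 'a \<Rightarrow> real.
           (\<forall>k\<in>{1..nat \<lceil>a * real n ^ 2\<rceil>}.
              X k \<in> borel_measurable P \<and>
              (\<forall>\<omega>\<in>space P. \<bar>X k \<omega>\<bar> \<le> b) \<and>
              (\<integral>\<omega>. X k \<omega> \<partial>P') - (\<integral>\<omega>. X k \<omega> \<partial>P) \<ge> \<Delta> n / real n) \<and>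
           pairwise_uncorrelated P {1..nat \<lceil>a * real n ^ 2\<rceil>} X \<and>
           pairwise_uncorrelated P' {1..nat \<lceil>a * real n ^ 2\<rceil>} X"
  shows "mutually_singular P P'"
proof (rule mutually_singular_if_separated)
  show "finite_measure P" "finite_measure P'"
    using assms(1,2) by (simp_all add: prob_space_def)
  fix \<epsilon> :: real assume "\<epsilon> > 0"
  have "eventually (\<lambda>n. 4 * b\<^sup>2 / (a * \<epsilon>) \<le> \<Delta> n ^ 2) sequentially"
    using filterlim_pow_at_top[OF _ assms(7), of 2] by (simp add: filterlim_at_top)
  moreover note assms(8)[folded eventually_sequentially]
  moreover have "eventually (\<lambda>n. n \<ge> 1) sequentially"
    by (rule eventually_ge_at_top)
  ultimately have "eventually (\<lambda>n. \<exists>A\<in>sets P. measure P A \<le> \<epsilon> \<and> measure P' (space P - A) \<le> \<epsilon>)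
      sequentially"
  proof eventually_elim
    case (elim n)
    have "4 * b\<^sup>2 / (a * (\<Delta> n)\<^sup>2) \<le> \<epsilon>"
      using elim(1) \<open>a > 0\<close> \<open>\<epsilon> > 0\<close> assms(6)[of n] by (simp add: field_simps)
    moreover from elim(2) obtain A where "A \<in> sets P"
      "measure P A \<le> 4 * b\<^sup>2 / (a * (\<Delta> n)\<^sup>2)"
      "measure P' (space P - A) \<le> 4 * b\<^sup>2 / (a * (\<Delta> n)\<^sup>2)"
      by (elim exE conjE bexE separating_set_of_quadratic_family[OF assms(1-4) assms(6) \<open>n \<ge> 1\<close>, elim_format])
    ultimately show ?case
      by (intro bexI[of _ A]) auto
  qed
  then show "\<exists>A\<in>sets P. measure P A \<le> \<epsilon> \<and> measure P' (space P - A) \<le> \<epsilon>"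
    by (auto simp: eventually_sequentially)
qed (fact assms(3))

end
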